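(* Assume Hypotheses 1, 2 and 3 (see context). For any $x\in\Gamma$ and any $\mathbf{x}\in T(x)$, $$\|Q(t,x)\mathbf{x}\|\le 2\|\mathbf{x}\|\exp\Big(\int_0^t\big(\|D_ag(\Phi(s,x))\|+\ell(\Phi(s,x))\big)\,ds\Big)\quad\text{for all }t\ge0.$$
   Context: System $\dot x=F(x)$ with $F=(f,g)$, i.e. $\dot a=f(a,z)$, $\dot z=g(a,z)$, $(a,z)\in\mathbb{R}^n\times\mathbb{R}^m$, $X=\mathbb{R}^n\times\mathbb{R}^m$, flow $\Phi(t,x)$. Euclidean inner product, norm, operator norm. $\mathcal{L}(x_1,x_2)=\|a_2-a_1\|^2-\|z_2-z_1\|^2$, $\mathcal{C}(x)=\{x'\in X:\mathcal{L}(x',x)\ge0\}$, $\mathbf{0}$ the zero vector of $X$; $\Pi(a,z)=a$, $\Pi_\perp(a,z)=z$; $\mathbb{B}_d(x)=\{(a',z'):\|a'-a\|\le d,\|z'-z\|\le d\}$. $\Gamma\subseteq U$ positively invariant means $\Phi(t,x)$ is defined for all $t\ge0$ for $x\in\Gamma$ and $\Phi(t,\Gamma)\subseteq\Gamma$. Hypothesis 1: $U$ open and convex, and there is $d>0$ with $\mathcal{C}(x)\cap U\subset\mathbb{B}_d(x)$ for all $x\in U$. Hypothesis 2: $f,g$ are $C^1$ on $U$; there exist continuous $\alpha>0$, $\ell\ge0$ on $U$ and $c_1>0$ with, for all $x\in U$: $\langle a',D_af(x)a'\rangle\ge\alpha(x)\|a'\|^2$; $\langle z',D_zg(x)z'\rangle\le\ell(x)\|z'\|^2$;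 $\alpha(x)\ge\ell(x)+\|D_zf(x)\|+\|D_ag(x)\|+c_1$. Hypothesis 3: $\Gamma\subset U$ is positively invariant and $\Pi_\perp(\Gamma)=\Pi_\perp(U)$. For $x\in\Gamma$, $Q(t,x)$ ($t\ge0$) denotes the fundamental matrix solution of the variational equation $\dot{\mathbf{x}}=DF(\Phi(t,x))\mathbf{x}$ with $Q(0,x)=I$. For $x\in\Gamma$, $T(x):=\{\mathbf{x}\in X: \mathcal{L}(Q(t,x)\mathbf{x},\mathbf{0})\le0\text{ for all }t\ge0\}$, i.e. the set of $\mathbf{x}$ with $Q(t,x)\mathbf{x}\notin\operatorname{int}\mathcal{C}(\mathbf{0})$ for all $t\ge0$. *)

theory Defs
  imports "HOL-Analysis.Analysis"
begin

text \<open>Phase space X = R^n x R^m, modelled as the product 'a x 'b of two Euclidean spaces;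
  the norm/inner product on the product type is the Euclidean one.\<close>

definition lyapL :: "('a::real_normed_vector \<times> 'b::real_normed_vector) \<Rightarrow> ('a \<times> 'b) \<Rightarrow> real" where
  "lyapL x1 x2 = (norm (fst x2 - fst x1))\<^sup>2 - (norm (snd x2 - snd x1))\<^sup>2"

definition coneC :: "('a::real_normed_vector \<times> 'b::real_normed_vector) \<Rightarrow> ('a \<times> 'b) set" where
  "coneC x = {x'. lyapL x' x \<ge> 0}"

definition boxB :: "real \<Rightarrow> ('a::real_normed_vector \<times> 'b::real_normed_vector) \<Rightarrow> ('a \<times> 'b) set" where
  "boxB d x = {x'. norm (fst x' - fst x) \<le> d \<and> norm (snd x' - snd x) \<le> d}"

definition partA :: "(('a::real_normed_vector \<times> 'b::real_normed_vector) \<Rightarrow>\<^sub>L 'c::real_normed_vector) \<Rightarrow> 'a \<Rightarrow> 'c" where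
  "partA D = (\<lambda>a'. blinfun_apply D (a', 0))"

definition partZ :: "(('a::real_normed_vector \<times> 'b::real_normed_vector) \<Rightarrow>\<^sub>L 'c::real_normed_vector) \<Rightarrow> 'b \<Rightarrow> 'c" where
  "partZ D = (\<lambda>z'. blinfun_apply D (0, z'))"

text \<open>T(x): vectors whose image under the fundamental matrix never enters the interior of C(0).\<close>
definition Tset :: "(real \<Rightarrow> ('a::real_normed_vector \<times> 'b::real_normed_vector) \<Rightarrow> ('a \<times> 'b) \<Rightarrow> ('a \<times> 'b))
     \<Rightarrow> ('a \<times> 'b) \<Rightarrow> ('a \<times> 'b) set" where
  "Tset Q x = {v. \<forall>t\<ge>0. lyapL (Q t x v) 0 \<le> 0}"

end

theory Submission
  imports Defs
begin

(*
  Write w(s) = Q(s,x) v = (a(s), z(s)).  Because v lies in T(x), w(s) never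
  enters the interior of the cone C(0), i.e. |a(s)| <= |z(s)| for all s >= 0.
  The z-component obeys z' = D_a g a + D_z g z, so with the cone condition and
  the dissipativity bound <z', D_z g z'> <= ell |z'|^2 one gets
      d/ds |z|^2  <=  2 k(s) |z|^2,      k = ||D_a g|| + ell  along the orbit.
  A differential Gronwall inequality then yields |z(t)| <= |z(0)| exp(int_0^t k),
  and finally |w(t)| <= sqrt 2 |z(t)| <= 2 |v| exp(int_0^t k).
*)

lemma blinfun_apply_partA_partZ:
  "blinfun_apply D (a, z) = partA D a + partZ D z"
proof -
  have "(a, z) = (a, 0) + (0, z)" by simp
  then show ?thesis unfolding partA_def partZ_def by (metis blinfun.add_right)
qed

text \<open>The partial derivative in the first component is the composition with the
  embedding a \<mapsto> (a, 0); hence it is bounded linear and its operator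
  norm depends continuously on the derivative.\<close>
definition embedA :: "'a::real_normed_vector \<Rightarrow>\<^sub>L ('a \<times> 'b::real_normed_vector)" where
  "embedA = Blinfun (\<lambda>a. (a, 0))"

lemma blinfun_apply_embedA: "blinfun_apply embedA = (\<lambda>a. (a, 0))"
proof -
  have "bounded_linear (\<lambda>a::'a. (a, 0::'b))"
    by (intro bounded_linear_Pair bounded_linear_ident bounded_linear_zero)
  then show ?thesis unfolding embedA_def by (simp add: bounded_linear_Blinfun_apply)
qed

lemma partA_eq_compose: "partA D = blinfun_apply (D o\<^sub>L embedA)"
  unfolding partA_def by (auto simp: blinfun_apply_embedA)

lemma bounded_linear_partA: "bounded_linear (partA D)"
  unfolding partA_eq_compose by (rule blinfun.bounded_linear_right)

lemma continuous_on_onorm_partA: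
  assumes "continuous_on S D"
  shows "continuous_on S (\<lambda>s. onorm (partA (D s)))"
  unfolding partA_eq_compose norm_blinfun.rep_eq[symmetric]
  by (intro continuous_intros assms)

lemma outside_cone_fst_le_snd:
  assumes "lyapL w 0 \<le> 0"
  shows "norm (fst w) \<le> norm (snd w)"
proof -
  have "(norm (fst w))\<^sup>2 \<le> (norm (snd w))\<^sup>2"
    using assms unfolding lyapL_def by simp
  then show ?thesis by (rule power2_le_imp_le) simp
qed

text \<open>Consequently the whole vector is controlled by its second component
  (with the constant \<surd>2, which we round up to 2).\<close>
lemma outside_cone_norm_le:
  assumes "lyapL w 0 \<le> 0"
  shows "norm w \<le> 2 * norm (snd w)"
proof -
  have "(norm w)\<^sup>2 = (norm (fst w))\<^sup>2 + (norm (snd w))\<^sup>2"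
    by (cases w) (simp add: norm_Pair)
  also have "\<dots> \<le> 2 * (norm (snd w))\<^sup>2"
    using power_mono[OF outside_cone_fst_le_snd[OF assms] norm_ge_zero, of 2] by simp
  also have "\<dots> \<le> (2 * norm (snd w))\<^sup>2"
    by (simp add: power_mult_distrib)
  finally show ?thesis by (rule power2_le_imp_le) simp
qed

lemma inner_snd_outside_cone_le:
  fixes D :: "('a::real_inner \<times> 'b::real_inner) \<Rightarrow>\<^sub>L 'b"
  assumes cone: "lyapL w 0 \<le> 0"
    and diss: "\<And>z'. inner z' (partZ D z') \<le> ell * (norm z')\<^sup>2"
  shows "inner (snd w) (blinfun_apply D w) \<le> (onorm (partA D) + ell) * (norm (snd w))\<^sup>2"
proof -
  obtain a z where w: "w = (a, z)" by (cases w)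
  have a_le_z: "norm a \<le> norm z"
    using outside_cone_fst_le_snd[OF cone] by (simp add: w)
  have "inner z (partA D a) \<le> norm z * norm (partA D a)"
    by (rule norm_cauchy_schwarz)
  also have "\<dots> \<le> norm z * (onorm (partA D) * norm a)"
    by (rule mult_left_mono[OF onorm[OF bounded_linear_partA] norm_ge_zero])
  also have "\<dots> \<le> norm z * (onorm (partA D) * norm z)"
    by (rule mult_left_mono[OF mult_left_mono[OF a_le_z onorm_pos_le[OF bounded_linear_partA]]
          norm_ge_zero])
  finally have "inner z (partA D a) \<le> onorm (partA D) * (norm z)\<^sup>2"
    by (simp add: power2_eq_square mult_ac)
  moreover have "inner (snd w) (blinfun_apply D w) = inner z (partA D a) + inner z (partZ D z)"
    by (simp add: w blinfun_apply_partA_partZ inner_add_right)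
  ultimately show ?thesis
    using diss[of z] by (simp add: w distrib_right)
qed

lemma has_vector_derivative_snd:
  assumes "(w has_vector_derivative (p, q)) F"
  shows "((\<lambda>s. snd (w s)) has_vector_derivative q) F"
proof -
  have "((\<lambda>s. snd (w s)) has_derivative (\<lambda>h. snd (h *\<^sub>R (p, q)))) F"
    using assms unfolding has_vector_derivative_def by (rule has_derivative_snd)
  then show ?thesis unfolding has_vector_derivative_def by simp
qed

lemma continuous_on_interval_if_differentiable:
  assumes "\<And>s. 0 \<le> s \<Longrightarrow> (y has_vector_derivative y' s) (at s within {0..})"
  shows "continuous_on {0..t} y"
proof (rule continuous_on_subset)
  show "continuous_on {0..} y"
    using assms unfolding continuous_on_eq_continuous_within
    by (auto intro: has_vector_derivative_continuous)
qed auto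

text \<open>If N' \<le> c k N on [0,t] with k continuous, then
  N(t) \<le> N(0) exp(c K(t)): the function
  N(s) exp(-c K(s)) is non-increasing, where K(s) is the integral of k over [0,s].\<close>
lemma differential_gronwall:
  fixes N N' k :: "real \<Rightarrow> real"
  assumes t: "0 \<le> t"
    and deriv: "\<And>s. s \<in> {0..t} \<Longrightarrow> (N has_real_derivative N' s) (at s within {0..t})"
    and bound: "\<And>s. s \<in> {0..t} \<Longrightarrow> N' s \<le> c * k s * N s"
    and cont: "continuous_on {0..t} k"
  shows "N t \<le> N 0 * exp (c * integral {0..t} k)"
proof -
  define K where "K s = integral {0..s} k" for s
  define h where "h s = N s * exp (- c * K s)" for s
  define h' where "h' s = (N' s - c * k s * N s) * exp (- c * K s)" for s
  have h_deriv: "(h has_vector_derivative h' s) (at s within {0..t})" if s: "s \<in> {0..t}" for s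
  proof -
    have "(K has_real_derivative k s) (at s within {0..t})"
      unfolding K_def by (rule integral_has_real_derivative[OF cont s])
    then have "(h has_real_derivative h' s) (at s within {0..t})"
      unfolding h_def[abs_def] h'_def
      by (auto intro!: derivative_eq_intros deriv[OF s] simp: algebra_simps)
    then show ?thesis by (simp add: has_real_derivative_iff_has_vector_derivative)
  qed
  have "h' s \<le> 0" if "s \<in> {0..t}" for s
    unfolding h'_def using bound[OF that] by (intro mult_nonpos_nonneg) auto
  then have "h t - h 0 \<le> 0"
    using has_integral_le[OF fundamental_theorem_of_calculus[OF t h_deriv], of "\<lambda>_. 0" 0]
    by auto
  then have "N t * exp (- c * K t) \<le> N 0"
    by (simp add: h_def K_def)
  then have "N t * exp (- c * K t) * exp (c * K t) \<le> N 0 * exp (c * K t)"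
    by (rule mult_right_mono) simp
  moreover have "N t * exp (- c * K t) * exp (c * K t) = N t"
    by (simp add: mult.assoc flip: exp_add)
  ultimately have "N t \<le> N 0 * exp (c * K t)" by linarith
  then show ?thesis by (simp only: K_def)
qed

lemma snd_growth_outside_cone:
  fixes w :: "real \<Rightarrow> 'a::real_inner \<times> 'b::real_inner"
    and G :: "real \<Rightarrow> ('a \<times> 'b) \<Rightarrow>\<^sub>L 'b"
  assumes t: "0 \<le> t"
    and deriv: "\<And>s. s \<in> {0..t} \<Longrightarrow>
                  ((\<lambda>s. snd (w s)) has_vector_derivative G s (w s)) (at s within {0..t})"
    and cone: "\<And>s. s \<in> {0..t} \<Longrightarrow> lyapL (w s) 0 \<le> 0"
    and diss: "\<And>s z'. s \<in> {0..t} \<Longrightarrow> inner z' (partZ (G s) z') \<le> ell s * (norm z')\<^sup>2"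
    and cont: "continuous_on {0..t} (\<lambda>s. onorm (partA (G s)) + ell s)"
  shows "norm (snd (w t)) \<le> norm (snd (w 0)) * exp (integral {0..t} (\<lambda>s. onorm (partA (G s)) + ell s))"
    (is "_ \<le> _ * exp (integral _ ?k)")
proof -
  define N where "N s = (norm (snd (w s)))\<^sup>2" for s
  have N_deriv: "(N has_real_derivative 2 * inner (snd (w s)) (G s (w s))) (at s within {0..t})"
    if "s \<in> {0..t}" for s
  proof -
    have "((\<lambda>s. inner (snd (w s)) (snd (w s))) has_derivative
        (\<lambda>h. inner (snd (w s)) (h *\<^sub>R G s (w s)) + inner (h *\<^sub>R G s (w s)) (snd (w s))))
        (at s within {0..t})"
      using deriv[OF that] unfolding has_vector_derivative_def by (intro has_derivative_inner)
    then show ?thesis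
      unfolding has_field_derivative_def N_def power2_norm_eq_inner
      by (rule has_derivative_eq_rhs) (auto simp: inner_commute algebra_simps)
  qed
  have "2 * inner (snd (w s)) (G s (w s)) \<le> 2 * ?k s * N s" if "s \<in> {0..t}" for s
  proof -
    have "inner (snd (w s)) (G s (w s)) \<le> ?k s * N s"
      unfolding N_def by (rule inner_snd_outside_cone_le[OF cone[OF that] diss[OF that]])
    then show ?thesis by linarith
  qed
  then have "N t \<le> N 0 * exp (2 * integral {0..t} ?k)"
    by (intro differential_gronwall[OF t N_deriv _ cont])
  also have "\<dots> = (norm (snd (w 0)) * exp (integral {0..t} ?k))\<^sup>2"
    by (simp add: N_def power_mult_distrib exp_double)
  finally show ?thesis
    unfolding N_def by (rule power2_le_imp_le) simp
qed

theorem lemma2p6: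
  fixes f :: "'a::euclidean_space \<times> 'b::euclidean_space \<Rightarrow> 'a"
    and g :: "'a \<times> 'b \<Rightarrow> 'b"
    and Df :: "'a \<times> 'b \<Rightarrow> ('a \<times> 'b) \<Rightarrow>\<^sub>L 'a"
    and Dg :: "'a \<times> 'b \<Rightarrow> ('a \<times> 'b) \<Rightarrow>\<^sub>L 'b"
    and U \<Gamma> :: "('a \<times> 'b) set"
    and d c1 :: real
    and \<alpha> ell :: "'a \<times> 'b \<Rightarrow> real"
    and \<Phi> :: "real \<Rightarrow> 'a \<times> 'b \<Rightarrow> 'a \<times> 'b"
    and Q :: "real \<Rightarrow> 'a \<times> 'b \<Rightarrow> ('a \<times> 'b) \<Rightarrow> ('a \<times> 'b)"
  assumes H1_open: "open U" and H1_convex: "convex U"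
    and H1_d: "d > 0" and H1_cone: "\<forall>x\<in>U. coneC x \<inter> U \<subseteq> boxB d x"
    and H2_f: "\<forall>x\<in>U. (f has_derivative blinfun_apply (Df x)) (at x)"
    and H2_g: "\<forall>x\<in>U. (g has_derivative blinfun_apply (Dg x)) (at x)"
    and H2_Df_cont: "continuous_on U Df" and H2_Dg_cont: "continuous_on U Dg"
    and H2_alpha_cont: "continuous_on U \<alpha>" and H2_ell_cont: "continuous_on U ell"
    and H2_alpha_pos: "\<forall>x\<in>U. \<alpha> x > 0" and H2_ell_nonneg: "\<forall>x\<in>U. ell x \<ge> 0"
    and H2_c1: "c1 > 0"
    and H2_a: "\<forall>x\<in>U. \<forall>a'. inner a' (partA (Df x) a') \<ge> \<alpha> x * (norm a')\<^sup>2"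
    and H2_z: "\<forall>x\<in>U. \<forall>z'. inner z' (partZ (Dg x) z') \<le> ell x * (norm z')\<^sup>2"
    and H2_gap: "\<forall>x\<in>U. \<alpha> x \<ge> ell x + onorm (partZ (Df x)) + onorm (partA (Dg x)) + c1"
    and H3_sub: "\<Gamma> \<subseteq> U"
    and H3_flow0: "\<forall>x\<in>\<Gamma>. \<Phi> 0 x = x"
    and H3_flow: "\<forall>x\<in>\<Gamma>. \<forall>t\<ge>0. ((\<lambda>s. \<Phi> s x) has_vector_derivative
                     (f (\<Phi> t x), g (\<Phi> t x))) (at t within {0..})"
    and H3_inv: "\<forall>x\<in>\<Gamma>. \<forall>t\<ge>0. \<Phi> t x \<in> \<Gamma>"
    and H3_proj: "snd ` \<Gamma> = snd ` U"
    and Q0: "\<forall>x\<in>\<Gamma>. \<forall>v. Q 0 x v = v"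
    and Qvar: "\<forall>x\<in>\<Gamma>. \<forall>v. \<forall>t\<ge>0. ((\<lambda>s. Q s x v) has_vector_derivative
                 (blinfun_apply (Df (\<Phi> t x)) (Q t x v), blinfun_apply (Dg (\<Phi> t x)) (Q t x v)))
                 (at t within {0..})"
    and x_in: "x \<in> \<Gamma>"
    and v_in: "v \<in> Tset Q x"
    and t_nonneg: "t \<ge> 0"
  shows "norm (Q t x v) \<le> 2 * norm v *
           exp (integral {0..t} (\<lambda>s. onorm (partA (Dg (\<Phi> s x))) + ell (\<Phi> s x)))"
proof -
  define w where "w s = Q s x v" for s
  have orbit_in_U: "\<Phi> s x \<in> U" if "s \<in> {0..t}" for s
    using H3_inv H3_sub x_in that by auto
  have w_start: "w 0 = v"
    unfolding w_def using Q0 x_in by blast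
  have v_snd_le: "norm (snd v) \<le> norm v"
    by (metis norm_snd_le prod.collapse)
  have cone: "lyapL (w s) 0 \<le> 0" if "s \<ge> 0" for s
    using v_in that by (simp add: Tset_def w_def)
  have snd_deriv: "((\<lambda>s. snd (w s)) has_vector_derivative Dg (\<Phi> s x) (w s)) (at s within {0..t})"
    if "s \<in> {0..t}" for s
  proof (rule has_vector_derivative_snd[OF has_vector_derivative_within_subset])
    show "(w has_vector_derivative (Df (\<Phi> s x) (w s), Dg (\<Phi> s x) (w s))) (at s within {0..})"
      using Qvar x_in that unfolding w_def[abs_def] atLeastAtMost_iff by blast
  qed auto
  have orbit_cont: "continuous_on {0..t} (\<lambda>s. \<Phi> s x)"
    using H3_flow x_in by (intro continuous_on_interval_if_differentiable) blast
  have rate_cont: "continuous_on {0..t} (\<lambda>s. onorm (partA (Dg (\<Phi> s x))) + ell (\<Phi> s x))"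
    using orbit_in_U
    by (intro continuous_intros continuous_on_onorm_partA
        continuous_on_compose2[OF H2_Dg_cont orbit_cont] continuous_on_compose2[OF H2_ell_cont orbit_cont])
      auto
  have "norm (w t) \<le> 2 * norm (snd (w t))"
    using cone[OF t_nonneg] by (rule outside_cone_norm_le)
  also have "\<dots> \<le> 2 * (norm (snd (w 0)) *
                 exp (integral {0..t} (\<lambda>s. onorm (partA (Dg (\<Phi> s x))) + ell (\<Phi> s x))))"
    using snd_growth_outside_cone[OF t_nonneg snd_deriv _ _ rate_cont] cone H2_z orbit_in_U by auto
  also have "\<dots> \<le> 2 * norm v * exp (integral {0..t} (\<lambda>s. onorm (partA (Dg (\<Phi> s x))) + ell (\<Phi> s x)))"
    using mult_right_mono[OF v_snd_le exp_ge_zero] by (simp add: w_start mult.assoc)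
  finally show ?thesis by (simp add: w_def)
qed

end
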